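(* Let $Z\sim N(0,1)$ and $X=H_4(Z)=Z^4-6Z^2+3$. Let $f$ be three times differentiable on $(-6,\infty)$, and suppose that $\mathbb{E}|X^2f^{(i)}(X)|<\infty$ for $i=2,3$, $\mathbb{E}|Xf^{(j)}(X)|<\infty$ for $j=0,1,2,3$, and $\mathbb{E}|f^{(k)}(X)|<\infty$ for $k=1,2,3$. Then $$\mathbb{E}\big[192(X+6)(3-X)f^{(3)}(X)+16(X+3)(X-12)f''(X)+4(11X+6)f'(X)-Xf(X)\big]=0.$$
   Context: $f^{(0)}\equiv f$, and $f^{(k)}$ denotes the $k$-th derivative of $f$. $H_4(x)=x^4-6x^2+3$ is the fourth Hermite polynomial. *)

theory Defs
  imports "HOL-Probability.Probability"
begin

definition H4 :: "real \<Rightarrow> real" where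
  "H4 x = x ^ 4 - 6 * x ^ 2 + 3"

end

theory Submission
  imports Defs
begin

(* Integrating against the density phi of Z turns the expectation into the Lebesgue integral of
   phi(z) (A f)(H4 z), where A is the operator of the statement.  Away from the zeros +-sqrt 3 of
   H4 + 6, where f need not be differentiable, this integrand has the explicit antiderivative
     Phi(z) = phi(z) (a(z) f''(H4 z) + b(z) f'(H4 z) + c(z) f(H4 z))
   with a = 48 z (z^2 - 3)(6 - z^2), b = 4 z^5 - 48 z^3 + 156 z and c = z^3 - 3 z.  The functions
   f^(k)(H4 z), k < 3, have limits at sqrt 3: from the right because their derivatives are integrable
   there, and the same limit from the left because H4 (sqrt (6 - z^2)) = H4 z.  So Phi extends to a
   continuous odd function.  It converges at infinity since Phi' is integrable, and the limit is 0
   because |Phi(z)| <= z r(z) with r integrable.  Hence the integral is lim (Phi(t) - Phi(-t)) = 0. *)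

section \<open>Real analysis on the line\<close>

lemma borel_measurable_deriv_on_open:
  fixes g :: "real \<Rightarrow> real"
  assumes S: "open S" and g: "\<And>x. x \<in> S \<Longrightarrow> g differentiable (at x)"
  shows "(\<lambda>x. if x \<in> S then deriv g x else 0) \<in> borel_measurable borel"
proof -
  define gS where "gS x = (if x \<in> S then g x else 0)" for x
  have [measurable]: "gS \<in> borel_measurable borel"
    unfolding gS_def using S g
    by (intro borel_measurable_continuous_on_if continuous_at_imp_continuous_on ballI
        differentiable_imp_continuous_within) auto
  have [measurable]: "S \<in> sets borel" using S by auto
  define q where "q n x = (if x \<in> S then (gS (x + 1 / Suc n) - gS x) * Suc n else 0)" for n :: nat and x
  show ?thesis
  proof (rule borel_measurable_LIMSEQ_real[where u = q])
    show "q n \<in> borel_measurable borel" for n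
      unfolding q_def by measurable
    fix x :: real
    show "(\<lambda>n. q n x) \<longlonglongrightarrow> (if x \<in> S then deriv g x else 0)"
    proof (cases "x \<in> S")
      case True
      have "DERIV g x :> deriv g x"
        using g[OF True] by (simp add: DERIV_deriv_iff_real_differentiable)
      then have quotient: "((\<lambda>h. (g (x + h) - g x) / h) \<longlongrightarrow> deriv g x) (at 0)"
        by (rule DERIV_D)
      have vanishing_step: "filterlim (\<lambda>n::nat. 1 / real (Suc n)) (at 0) sequentially"
        unfolding filterlim_at by (auto intro: LIMSEQ_Suc[OF lim_inverse_n'] simp del: of_nat_Suc)
      have "(\<lambda>n. (g (x + 1 / real (Suc n)) - g x) / (1 / real (Suc n))) \<longlonglongrightarrow> deriv g x"
        using filterlim_compose[OF quotient vanishing_step] by (simp add: o_def)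
      moreover have "\<forall>\<^sub>F n in sequentially. x + 1 / real (Suc n) \<in> S"
      proof -
        have "((\<lambda>n. x + 1 / real (Suc n)) \<longlongrightarrow> x + 0) sequentially"
          by (intro tendsto_add tendsto_const LIMSEQ_Suc[OF lim_inverse_n'])
        then show ?thesis using S True by (simp add: tendsto_def)
      qed
      then have "\<forall>\<^sub>F n in sequentially.
          (g (x + 1 / real (Suc n)) - g x) / (1 / real (Suc n)) = q n x"
        by eventually_elim (use True in \<open>simp add: q_def gS_def\<close>)
      ultimately show ?thesis
        using True by (simp add: Lim_transform_eventually)
    qed (simp add: q_def)
  qed
qed

text \<open>Outside the open set where the derivatives are known to exist, deriv returns arbitrary
  values; cutting them off makes the derivatives Borel measurable.\<close>
definition restrict_deriv :: "real set \<Rightarrow> (real \<Rightarrow> real) \<Rightarrow> nat \<Rightarrow> real \<Rightarrow> real" where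
  "restrict_deriv S f k x = (if x \<in> S then (deriv ^^ k) f x else 0)"

lemma has_real_derivative_restrict_deriv:
  assumes "open S" "x \<in> S" "(deriv ^^ k) f differentiable (at x)"
  shows "(restrict_deriv S f k has_real_derivative restrict_deriv S f (Suc k) x) (at x)"
proof -
  have "((deriv ^^ k) f has_real_derivative restrict_deriv S f (Suc k) x) (at x)"
    using assms(2,3) by (simp add: restrict_deriv_def DERIV_deriv_iff_real_differentiable)
  then show ?thesis
    by (rule has_field_derivative_transform_within_open[OF _ assms(1,2)]) (simp add: restrict_deriv_def)
qed

lemma borel_measurable_restrict_deriv:
  assumes S: "open S" and "k \<le> n" "0 < n"
    and diff: "\<And>j x. j < n \<Longrightarrow> x \<in> S \<Longrightarrow> (deriv ^^ j) f differentiable (at x)"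
  shows "restrict_deriv S f k \<in> borel_measurable borel"
  unfolding restrict_deriv_def[abs_def]
proof (cases k)
  case 0
  have "continuous_on S f"
    using diff[of 0] \<open>0 < n\<close>
    by (auto intro!: continuous_at_imp_continuous_on differentiable_imp_continuous_within)
  then show "(\<lambda>x. if x \<in> S then (deriv ^^ k) f x else 0) \<in> borel_measurable borel"
    using S 0 by (intro borel_measurable_continuous_on_if) auto
next
  case (Suc j)
  have "(\<lambda>x. if x \<in> S then deriv ((deriv ^^ j) f) x else 0) \<in> borel_measurable borel"
    using S diff[of j] Suc \<open>k \<le> n\<close> by (intro borel_measurable_deriv_on_open) auto
  then show "(\<lambda>x. if x \<in> S then (deriv ^^ k) f x else 0) \<in> borel_measurable borel"
    by (simp only: Suc funpow.simps comp_apply)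
qed

lemma set_integrable_Icc_mult_continuous:
  fixes g h :: "real \<Rightarrow> real"
  assumes h: "continuous_on {a..b} h" and g: "integrable lborel g"
  shows "set_integrable lborel {a..b} (\<lambda>x. h x * g x)"
proof -
  have "bounded (h ` {a..b})"
    using compact_continuous_image[OF h compact_Icc] by (rule compact_imp_bounded)
  then obtain B where B: "\<forall>x\<in>{a..b}. norm (h x) \<le> B"
    unfolding bounded_iff by auto
  have [measurable]: "(\<lambda>x. indicator {a..b} x *\<^sub>R h x) \<in> borel_measurable borel"
    by (intro borel_measurable_continuous_on_indicator h) auto
  have [measurable]: "g \<in> borel_measurable borel"
    using borel_measurable_integrable[OF g] by simp
  show ?thesis
    unfolding set_integrable_def
  proof (rule Bochner_Integration.integrable_bound)
    show "integrable lborel (\<lambda>x. B * norm (g x))" using g by auto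
    have "(\<lambda>x. (indicator {a..b} x *\<^sub>R h x) * g x) \<in> borel_measurable borel" by measurable
    then show "(\<lambda>x. indicator {a..b} x *\<^sub>R (h x * g x)) \<in> borel_measurable lborel"
      by (simp add: mult.assoc)
    show "AE x in lborel. norm (indicator {a..b} x *\<^sub>R (h x * g x)) \<le> norm (B * norm (g x))"
    proof (rule AE_I2)
      fix x
      have "\<bar>h x\<bar> * \<bar>g x\<bar> \<le> \<bar>B\<bar> * \<bar>g x\<bar>" if "x \<in> {a..b}"
        using bspec[OF B that] by (intro mult_right_mono) (auto intro: order_trans[OF _ abs_ge_self])
      then show "norm (indicator {a..b} x *\<^sub>R (h x * g x)) \<le> norm (B * norm (g x))"
        by (auto simp: abs_mult split: split_indicator)
    qed
  qed
qed

lemma set_integral_Icc_antiderivative: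
  fixes F g :: "real \<Rightarrow> real"
  assumes g: "set_integrable lborel {a..b} g" and S: "finite S" and "a \<le> b"
    and cont: "continuous_on {a..b} F"
    and der: "\<And>x. a < x \<Longrightarrow> x < b \<Longrightarrow> x \<notin> S \<Longrightarrow> (F has_real_derivative g x) (at x)"
  shows "(LINT x:{a..b}|lborel. g x) = F b - F a"
proof -
  have "(g has_integral (F b - F a)) {a..b}"
    by (rule fundamental_theorem_of_calculus_interior_strong[OF S \<open>a \<le> b\<close>])
      (use der cont in \<open>auto simp: has_real_derivative_iff_has_vector_derivative[symmetric]\<close>)
  then show ?thesis
    using set_borel_integral_eq_integral(2)[OF g] by (simp add: integral_unique)
qed

lemma integral_lborel_eq_antiderivative_limit:
  fixes F g :: "real \<Rightarrow> real"
  assumes g: "integrable lborel g" and S: "finite S" and cont: "continuous_on UNIV F"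
    and der: "\<And>x. x \<notin> S \<Longrightarrow> (F has_real_derivative g x) (at x)"
    and lim: "((\<lambda>t. F t - F (-t)) \<longlongrightarrow> I) at_top"
  shows "integral\<^sup>L lborel g = I"
proof -
  have "((\<lambda>t. LINT x:{-t..t}|lborel. g x) \<longlongrightarrow> integral\<^sup>L lborel g) at_top"
    unfolding set_lebesgue_integral_def
  proof (rule integral_dominated_convergence_at_top[where w = "\<lambda>x. norm (g x)"])
    show "AE x in lborel. ((\<lambda>t. indicator {-t..t} x *\<^sub>R g x) \<longlongrightarrow> g x) at_top"
    proof (intro AE_I2 tendsto_eventually)
      show "\<forall>\<^sub>F t in at_top. indicator {-t..t} x *\<^sub>R g x = g x" for x
        using eventually_ge_at_top[of "\<bar>x\<bar>"] by eventually_elim (auto simp: indicator_def)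
    qed
  qed (use g in \<open>auto simp: indicator_def\<close>)
  moreover have "\<forall>\<^sub>F t in at_top. (LINT x:{-t..t}|lborel. g x) = F t - F (-t)"
    using eventually_ge_at_top[of 0]
  proof eventually_elim
    case (elim t)
    have "set_integrable lborel {-t..t} g"
      unfolding set_integrable_def using g by (intro integrable_mult_indicator) auto
    then show ?case
      using elim der by (intro set_integral_Icc_antiderivative[OF _ S] continuous_on_subset[OF cont]) auto
  qed
  ultimately have "((\<lambda>t. F t - F (-t)) \<longlongrightarrow> integral\<^sup>L lborel g) at_top"
    by (rule Lim_transform_eventually)
  from tendsto_unique[OF _ this lim] show ?thesis by simp
qed

lemma tendsto_at_right_if_integrable_derivative:
  fixes F g :: "real \<Rightarrow> real"
  assumes "p < q" and der: "\<And>x. p < x \<Longrightarrow> x < q \<Longrightarrow> (F has_real_derivative g x) (at x)"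
    and g: "set_integrable lborel {p..q} g"
  shows "\<exists>L. (F \<longlongrightarrow> L) (at_right p)"
proof -
  define m where "m = (p + q) / 2"
  have m: "p < m" "m < q" using \<open>p < q\<close> by (auto simp: m_def)
  have "g integrable_on {p..m}"
    using set_integrable_subset[OF g, of "{p..m}"] m
    by (auto intro: set_borel_integral_eq_integral(1))
  then have "continuous_on {p..m} (\<lambda>x. integral {x..m} g)"
    by (rule indefinite_integral_continuous_1')
  then have "((\<lambda>x. integral {x..m} g) \<longlongrightarrow> integral {p..m} g) (at p within {p..m})"
    using m by (auto simp: continuous_on_def)
  then have "((\<lambda>x. integral {x..m} g) \<longlongrightarrow> integral {p..m} g) (at_right p)"
    using m by (simp add: at_within_Icc_at_right)
  then have "((\<lambda>x. F m - integral {x..m} g) \<longlongrightarrow> F m - integral {p..m} g) (at_right p)"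
    by (intro tendsto_diff tendsto_const)
  moreover have "\<forall>\<^sub>F x in at_right p. F m - integral {x..m} g = F x"
    unfolding eventually_at_right[OF m(1)]
  proof (intro exI[of _ m] conjI m allI impI)
    fix x assume x: "p < x" "x < m"
    have "isCont F y" if "x \<le> y" "y \<le> m" for y
      using der[of y] that x m by (auto intro: DERIV_isCont)
    then have "continuous_on {x..m} F"
      by (auto intro!: continuous_at_imp_continuous_on)
    then have "(g has_integral (F m - F x)) {x..m}"
      using der x m
      by (intro fundamental_theorem_of_calculus_interior_strong[where S = "{}"])
        (auto simp: has_real_derivative_iff_has_vector_derivative[symmetric])
    then show "F m - integral {x..m} g = F x" by (simp add: integral_unique)
  qed
  ultimately show ?thesis by (blast intro: Lim_transform_eventually)
qed

lemma tendsto_at_top_if_integrable_derivative: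
  fixes F g :: "real \<Rightarrow> real"
  assumes g: "integrable lborel g" and S: "finite S" and cont: "continuous_on UNIV F"
    and der: "\<And>x. x \<notin> S \<Longrightarrow> (F has_real_derivative g x) (at x)"
  shows "\<exists>L. (F \<longlongrightarrow> L) at_top"
proof -
  have g_on: "set_integrable lborel A g" if "A \<in> sets lborel" for A
    unfolding set_integrable_def using g that by (intro integrable_mult_indicator) auto
  have "((\<lambda>t. F 0 + (LINT x:{0..t}|lborel. g x)) \<longlongrightarrow> F 0 + (LINT x:{0..}|lborel. g x)) at_top"
    by (intro tendsto_add tendsto_const tendsto_set_lebesgue_integral_at_top g_on) auto
  moreover have "\<forall>\<^sub>F t in at_top. F 0 + (LINT x:{0..t}|lborel. g x) = F t"
    using eventually_ge_at_top[of 0]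
    by eventually_elim
      (use der in \<open>auto simp: set_integral_Icc_antiderivative[OF g_on S _ continuous_on_subset[OF cont]]\<close>)
  ultimately show ?thesis by (blast intro: Lim_transform_eventually)
qed

lemma tendsto_at_top_eq_0_if_abs_le_integrable:
  fixes F r :: "real \<Rightarrow> real"
  assumes FL: "(F \<longlongrightarrow> L) at_top" and r: "integrable lborel r"
    and bound: "\<forall>\<^sub>F x in at_top. \<bar>F x\<bar> \<le> x * r x"
  shows "L = 0"
proof (rule ccontr)
  \<comment> \<open>Otherwise 1/x \<le> c |r x| for large x, so ln t - ln T would stay bounded as t grows.\<close>
  assume "L \<noteq> 0"
  have "\<forall>\<^sub>F x in at_top. dist (F x) L < \<bar>L\<bar> / 2"
    using FL \<open>L \<noteq> 0\<close> by (intro tendstoD) auto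
  moreover note bound eventually_ge_at_top[of 1]
  ultimately have "\<forall>\<^sub>F x in at_top. 1 / x \<le> (2 / \<bar>L\<bar>) * \<bar>r x\<bar> \<and> x \<ge> 1"
  proof eventually_elim
    case (elim x)
    have "\<bar>L\<bar> - \<bar>F x\<bar> \<le> dist (F x) L"
      by (simp add: dist_real_def abs_triangle_ineq3 abs_minus_commute)
    moreover have "x * r x \<le> x * \<bar>r x\<bar>"
      using elim by (intro mult_left_mono) auto
    ultimately have "\<bar>L\<bar> / 2 \<le> x * \<bar>r x\<bar>" using elim by linarith
    with elim \<open>L \<noteq> 0\<close> show ?case by (simp add: field_simps)
  qed
  then obtain T where T: "T \<ge> 1" and above_T: "\<And>x. x \<ge> T \<Longrightarrow> 1 / x \<le> (2 / \<bar>L\<bar>) * \<bar>r x\<bar>"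
    unfolding eventually_at_top_linorder by (metis order.refl)
  have r': "integrable lborel (\<lambda>x. (2 / \<bar>L\<bar>) * \<bar>r x\<bar>)" using r by auto
  define C where "C = (\<integral>x. (2 / \<bar>L\<bar>) * \<bar>r x\<bar> \<partial>lborel)"
  have "ln t - ln T \<le> C" if "t \<ge> T" for t
  proof -
    have cont: "continuous_on {T..t} (\<lambda>x. 1 / x)" using T by (intro continuous_intros) auto
    have "ln t - ln T = (LINT x:{T..t}|lborel. 1 / x)"
      using that T cont
      by (intro set_integral_Icc_antiderivative[where S = "{}", symmetric]
          borel_integrable_atLeastAtMost' continuous_on_ln derivative_eq_intros) auto
    also have "\<dots> \<le> (LINT x:{T..t}|lborel. (2 / \<bar>L\<bar>) * \<bar>r x\<bar>)"
    proof (rule set_integral_mono)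
      show "set_integrable lborel {T..t} (\<lambda>x. (2 / \<bar>L\<bar>) * \<bar>r x\<bar>)"
        unfolding set_integrable_def by (intro integrable_mult_indicator r') auto
    qed (use above_T T borel_integrable_atLeastAtMost'[OF cont] in auto)
    also have "\<dots> \<le> C"
      unfolding C_def set_lebesgue_integral_def
      by (intro integral_mono integrable_mult_indicator r') (auto simp: indicator_def)
    finally show ?thesis .
  qed
  moreover have "T * exp \<bar>C + 1\<bar> \<ge> T" using T by simp
  ultimately have "ln (T * exp \<bar>C + 1\<bar>) - ln T \<le> C" by blast
  then show False using T by (simp add: ln_mult)
qed

lemma distributed_integrable_AE_cong:
  assumes distr: "distributed M lborel Z g" and "\<And>x. 0 \<le> g x" and "integrable M (\<lambda>\<omega>. h (Z \<omega>))"
    and "AE \<omega> in M. h (Z \<omega>) = h' (Z \<omega>)" and [measurable]: "h' \<in> borel_measurable borel"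
  shows "integrable lborel (\<lambda>x. g x * h' x)"
proof -
  have [measurable]: "Z \<in> borel_measurable M"
    using distributed_measurable[OF distr] by simp
  have "integrable M (\<lambda>\<omega>. h' (Z \<omega>))"
    by (rule integrable_cong_AE_imp[OF assms(3) _ assms(4)]) measurable
  then show ?thesis
    using distributed_integrable[OF distr] assms(2) by simp
qed

section \<open>The polynomial H4 and the operator\<close>

lemma H4_minus [simp]: "H4 (- z) = H4 z"
  by (simp add: H4_def)

lemma H4_plus_6: "H4 z + 6 = (z\<^sup>2 - 3)\<^sup>2"
  unfolding H4_def by algebra

lemma H4_ge_minus_6: "H4 z \<ge> -6"
  using H4_plus_6[of z] zero_le_power2[of "z\<^sup>2 - 3"] by linarith

lemma H4_eq_minus_6_iff: "H4 z = -6 \<longleftrightarrow> z = sqrt 3 \<or> z = - sqrt 3"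
proof -
  have "H4 z = -6 \<longleftrightarrow> (z\<^sup>2 - 3)\<^sup>2 = 0" using H4_plus_6[of z] by auto
  also have "\<dots> \<longleftrightarrow> z\<^sup>2 = (sqrt 3)\<^sup>2" by simp
  finally show ?thesis by (simp only: power2_eq_iff)
qed

lemma H4_pos: "6 \<le> z\<^sup>2 \<Longrightarrow> H4 z > 0"
proof -
  assume "6 \<le> z\<^sup>2"
  then have "0 \<le> z\<^sup>2 * (z\<^sup>2 - 6)" by simp
  then show "H4 z > 0" by (simp add: H4_def power4_eq_xxxx power2_eq_square algebra_simps)
qed

lemma H4_reflect_sqrt3: "z\<^sup>2 \<le> 6 \<Longrightarrow> H4 (sqrt (6 - z\<^sup>2)) = H4 z"
  by (simp add: H4_def power4_eq_xxxx power2_eq_square[symmetric] algebra_simps)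

lemma has_real_derivative_H4: "(H4 has_real_derivative 4 * z ^ 3 - 12 * z) (at z)"
  unfolding H4_def[abs_def] by (rule derivative_eq_intros refl | simp)+

lemma abs_H4_antiderivative_coefficients_le:
  fixes z :: real
  assumes "z \<ge> 3"
  shows "\<bar>48 * z * (z\<^sup>2 - 3) * (6 - z\<^sup>2)\<bar> \<le> z * (48 * (H4 z + 15))"
    and "\<bar>4 * z ^ 5 - 48 * z ^ 3 + 156 * z\<bar> \<le> z * (48 * (H4 z + 15))"
    and "\<bar>z ^ 3 - 3 * z\<bar> \<le> z * H4 z"
proof -
  define w where "w = z\<^sup>2"
  have w: "w \<ge> 9" using power_mono[OF assms, of 2] by (simp add: w_def)
  have ww: "9 * w \<le> w * w" using w by (intro mult_right_mono) auto
  have H4_w: "H4 z = w\<^sup>2 - 6 * w + 3" unfolding H4_def w_def by algebra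
  have abs_le: "\<bar>z * p\<bar> \<le> z * q" if "0 \<le> p" "p \<le> q" for p q
    using assms that by (simp add: abs_mult mult_left_mono)
  have "48 * z * (z\<^sup>2 - 3) * (6 - z\<^sup>2) = - (z * (48 * ((w - 3) * (w - 6))))"
    unfolding w_def by algebra
  moreover have "48 * (H4 z + 15) - 48 * ((w - 3) * (w - 6)) = 144 * w"
    unfolding H4_w by algebra
  ultimately show "\<bar>48 * z * (z\<^sup>2 - 3) * (6 - z\<^sup>2)\<bar> \<le> z * (48 * (H4 z + 15))"
    using abs_le[of "48 * ((w - 3) * (w - 6))" "48 * (H4 z + 15)"] w by simp
  have "4 * z ^ 5 - 48 * z ^ 3 + 156 * z = z * (4 * ((w - 6)\<^sup>2 + 3))"
    unfolding w_def by algebra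
  moreover have "48 * (H4 z + 15) - 4 * ((w - 6)\<^sup>2 + 3) = 44 * (w * w) - 240 * w + 708"
    unfolding H4_w by algebra
  ultimately show "\<bar>4 * z ^ 5 - 48 * z ^ 3 + 156 * z\<bar> \<le> z * (48 * (H4 z + 15))"
    using abs_le[of "4 * ((w - 6)\<^sup>2 + 3)" "48 * (H4 z + 15)"] w ww by simp
  have "z ^ 3 - 3 * z = z * (w - 3)"
    unfolding w_def by algebra
  moreover have "H4 z - (w - 3) = w * w - 7 * w + 6"
    unfolding H4_w by algebra
  ultimately show "\<bar>z ^ 3 - 3 * z\<bar> \<le> z * H4 z"
    using abs_le[of "w - 3" "H4 z"] w ww by simp
qed

lemma eventually_H4_ne_minus_6: "\<forall>\<^sub>F y in at z. H4 y \<noteq> -6"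
proof -
  have "open (- ({sqrt 3, - sqrt 3} - {z}))" by (intro open_Compl finite_imp_closed) auto
  from eventually_at_in_open[OF this] show ?thesis
    by (rule eventually_mono) (auto simp: H4_eq_minus_6_iff)
qed

lemma AE_H4_gt_minus_6:
  assumes "distributed M lborel Z g"
  shows "AE \<omega> in M. H4 (Z \<omega>) > -6"
proof -
  have "AE x in lborel. x \<noteq> sqrt 3 \<and> x \<noteq> - sqrt 3"
    using AE_lborel_singleton[of "sqrt 3"] AE_lborel_singleton[of "- sqrt 3"] by eventually_elim auto
  then have "AE x in distr M lborel Z. H4 x > -6"
    unfolding distributed_distr_eq_density[OF assms]
    using distributed_borel_measurable[OF assms]
    by (subst AE_density)
      (auto elim!: AE_mp simp: H4_eq_minus_6_iff order.strict_iff_order H4_ge_minus_6)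
  then show ?thesis by (rule AE_distrD[OF distributed_measurable[OF assms]])
qed

lemma std_normal_density_has_real_derivative:
  "(std_normal_density has_real_derivative - z * std_normal_density z) (at z)"
  unfolding std_normal_density_def[abs_def]
  by (rule derivative_eq_intros refl | simp)+

definition H4_stein_operator :: "(nat \<Rightarrow> real \<Rightarrow> real) \<Rightarrow> real \<Rightarrow> real" where
  "H4_stein_operator g x = 192 * (x + 6) * (3 - x) * g 3 x + 16 * (x + 3) * (x - 12) * g 2 x
     + 4 * (11 * x + 6) * g 1 x - x * g 0 x"

lemma integrable_H4_stein_operator:
  fixes X w :: "'a \<Rightarrow> real"
  assumes "\<And>k. k \<in> {2, 3} \<Longrightarrow> integrable M (\<lambda>\<omega>. w \<omega> * ((X \<omega>)\<^sup>2 * g k (X \<omega>)))"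
    and "\<And>k. k \<in> {0, 1, 2, 3} \<Longrightarrow> integrable M (\<lambda>\<omega>. w \<omega> * (X \<omega> * g k (X \<omega>)))"
    and "\<And>k. k \<in> {1, 2, 3} \<Longrightarrow> integrable M (\<lambda>\<omega>. w \<omega> * g k (X \<omega>))"
  shows "integrable M (\<lambda>\<omega>. w \<omega> * H4_stein_operator g (X \<omega>))"
proof -
  have "w \<omega> * H4_stein_operator g (X \<omega>) =
      - 192 * (w \<omega> * ((X \<omega>)\<^sup>2 * g 3 (X \<omega>))) - 576 * (w \<omega> * (X \<omega> * g 3 (X \<omega>))) + 3456 * (w \<omega> * g 3 (X \<omega>))
      + 16 * (w \<omega> * ((X \<omega>)\<^sup>2 * g 2 (X \<omega>))) - 144 * (w \<omega> * (X \<omega> * g 2 (X \<omega>))) - 576 * (w \<omega> * g 2 (X \<omega>))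
      + 44 * (w \<omega> * (X \<omega> * g 1 (X \<omega>))) + 24 * (w \<omega> * g 1 (X \<omega>)) - w \<omega> * (X \<omega> * g 0 (X \<omega>))" for \<omega>
    unfolding H4_stein_operator_def by algebra
  then show ?thesis
    by (simp only:) (intro Bochner_Integration.integrable_add Bochner_Integration.integrable_diff
        Bochner_Integration.integrable_mult_right assms; simp)
qed

lemma borel_measurable_H4_stein_operator:
  assumes "\<And>k. k \<le> 3 \<Longrightarrow> g k \<in> borel_measurable borel"
  shows "H4_stein_operator g \<in> borel_measurable borel"
  using assms[of 0] assms[of 1] assms[of 2] assms[of 3]
  unfolding H4_stein_operator_def[abs_def] by measurable

section \<open>The identity for the Lebesgue integral against the normal density\<close>

locale H4_stein =
  fixes D :: "nat \<Rightarrow> real \<Rightarrow> real"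
  assumes D_deriv: "\<And>k x. k < 3 \<Longrightarrow> x > -6 \<Longrightarrow> (D k has_real_derivative D (Suc k) x) (at x)"
    and integrable_sq: "\<And>k. k \<in> {2, 3} \<Longrightarrow>
      integrable lborel (\<lambda>z. std_normal_density z * ((H4 z)\<^sup>2 * D k (H4 z)))"
    and integrable_lin: "\<And>k. k \<in> {0, 1, 2, 3} \<Longrightarrow>
      integrable lborel (\<lambda>z. std_normal_density z * (H4 z * D k (H4 z)))"
    and integrable_const: "\<And>k. k \<in> {1, 2, 3} \<Longrightarrow>
      integrable lborel (\<lambda>z. std_normal_density z * D k (H4 z))"
begin

lemma D_H4_has_real_derivative:
  assumes "k < 3" "H4 z \<noteq> -6"
  shows "((\<lambda>y. D k (H4 y)) has_real_derivative D (Suc k) (H4 z) * (4 * z ^ 3 - 12 * z)) (at z)"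
proof -
  have "H4 z > -6" using assms(2) H4_ge_minus_6[of z] by linarith
  from DERIV_chain2[OF D_deriv[OF assms(1) this] has_real_derivative_H4] show ?thesis .
qed

lemma D_H4_convergent_at_right_sqrt3:
  assumes "k < 3"
  shows "\<exists>L. ((\<lambda>z. D k (H4 z)) \<longlongrightarrow> L) (at_right (sqrt 3))"
proof (rule tendsto_at_right_if_integrable_derivative)
  show "sqrt 3 < 2" by (rule real_less_lsqrt) auto
  show "((\<lambda>y. D k (H4 y)) has_real_derivative D (Suc k) (H4 z) * (4 * z ^ 3 - 12 * z)) (at z)"
    if "sqrt 3 < z" for z
    using that assms by (intro D_H4_has_real_derivative) (auto simp: H4_eq_minus_6_iff)
  let ?h = "\<lambda>z. (4 * z ^ 3 - 12 * z) / std_normal_density z"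
  have "set_integrable lborel {sqrt 3..2} (\<lambda>z. ?h z * (std_normal_density z * D (Suc k) (H4 z)))"
    using assms normal_density_pos
    by (intro set_integrable_Icc_mult_continuous integrable_const continuous_intros
        continuous_at_imp_continuous_on ballI DERIV_isCont[OF std_normal_density_has_real_derivative]) 
      (auto simp: less_imp_neq[symmetric])
  then show "set_integrable lborel {sqrt 3..2} (\<lambda>z. D (Suc k) (H4 z) * (4 * z ^ 3 - 12 * z))"
    using normal_density_pos by (simp add: less_imp_neq[symmetric] mult.commute)
qed

lemma D_H4_tendsto_at_sqrt3:
  assumes "k < 3"
  shows "((\<lambda>z. D k (H4 z)) \<longlongrightarrow> Lim (at (sqrt 3)) (\<lambda>z. D k (H4 z))) (at (sqrt 3))"
proof -
  \<comment> \<open>z \<mapsto> sqrt (6 - z^2) exchanges the two sides of sqrt 3 and preserves H4.\<close>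
  obtain L where right: "((\<lambda>z. D k (H4 z)) \<longlongrightarrow> L) (at_right (sqrt 3))"
    using D_H4_convergent_at_right_sqrt3[OF assms] by blast
  have near_left: "\<forall>\<^sub>F z in at_left (sqrt 3). 0 < z \<and> z\<^sup>2 < 3"
    using eventually_at_left_real[of 0 "sqrt 3"]
  proof (rule eventually_mono)
    fix z :: real assume z: "z \<in> {0<..<sqrt 3}"
    then have "z\<^sup>2 < (sqrt 3)\<^sup>2" by (intro power_strict_mono) auto
    with z show "0 < z \<and> z\<^sup>2 < 3" by simp
  qed simp
  have "filterlim (\<lambda>z. sqrt (6 - z\<^sup>2)) (at_right (sqrt 3)) (at_left (sqrt 3))"
    unfolding filterlim_at
  proof
    have "((\<lambda>z. sqrt (6 - z\<^sup>2)) \<longlongrightarrow> sqrt (6 - (sqrt 3)\<^sup>2)) (at_left (sqrt 3))"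
      by (intro tendsto_intros)
    then show "((\<lambda>z. sqrt (6 - z\<^sup>2)) \<longlongrightarrow> sqrt 3) (at_left (sqrt 3))" by simp
    show "\<forall>\<^sub>F z in at_left (sqrt 3). sqrt (6 - z\<^sup>2) \<in> {sqrt 3<..} \<and> sqrt (6 - z\<^sup>2) \<noteq> sqrt 3"
      using near_left by (rule eventually_mono) auto
  qed
  with right have "((\<lambda>z. D k (H4 (sqrt (6 - z\<^sup>2)))) \<longlongrightarrow> L) (at_left (sqrt 3))"
    by (rule filterlim_compose)
  moreover have "\<forall>\<^sub>F z in at_left (sqrt 3). D k (H4 (sqrt (6 - z\<^sup>2))) = D k (H4 z)"
    using near_left by (rule eventually_mono) (simp add: H4_reflect_sqrt3)
  ultimately have "((\<lambda>z. D k (H4 z)) \<longlongrightarrow> L) (at_left (sqrt 3))"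
    by (rule Lim_transform_eventually)
  with right have "((\<lambda>z. D k (H4 z)) \<longlongrightarrow> L) (at (sqrt 3))"
    by (intro filterlim_split_at)
  then show ?thesis by (simp add: tendsto_Lim)
qed

lemma D_H4_tendsto:
  assumes "k < 3" "H4 z = -6"
  shows "((\<lambda>y. D k (H4 y)) \<longlongrightarrow> Lim (at (sqrt 3)) (\<lambda>y. D k (H4 y))) (at z)"
proof -
  have "((\<lambda>y. D k (H4 (- y))) \<longlongrightarrow> Lim (at (sqrt 3)) (\<lambda>y. D k (H4 y))) (at (sqrt 3))"
    using D_H4_tendsto_at_sqrt3[OF assms(1)] by simp
  then have "((\<lambda>y. D k (H4 y)) \<longlongrightarrow> Lim (at (sqrt 3)) (\<lambda>y. D k (H4 y))) (at (- sqrt 3))"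
    by (simp add: filtermap_at_minus[symmetric] filterlim_filtermap)
  then show ?thesis
    using assms D_H4_tendsto_at_sqrt3 by (auto simp: H4_eq_minus_6_iff)
qed

definition D_H4_ext :: "nat \<Rightarrow> real \<Rightarrow> real" where
  "D_H4_ext k z = (if H4 z = -6 then Lim (at (sqrt 3)) (\<lambda>y. D k (H4 y)) else D k (H4 z))"

lemma D_H4_ext_minus [simp]: "D_H4_ext k (- z) = D_H4_ext k z"
  by (simp add: D_H4_ext_def)

lemma has_real_derivative_D_H4_ext:
  assumes "k < 3" "H4 z \<noteq> -6"
  shows "(D_H4_ext k has_real_derivative D (Suc k) (H4 z) * (4 * z ^ 3 - 12 * z)) (at z)"
proof (rule has_field_derivative_transform_within_open[OF D_H4_has_real_derivative[OF assms]])
  have "continuous_on UNIV H4"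
    unfolding H4_def[abs_def] by (intro continuous_intros)
  then show "open {y. H4 y \<noteq> -6}"
    by (intro open_Collect_neq continuous_intros)
qed (use assms in \<open>auto simp: D_H4_ext_def\<close>)

lemma isCont_D_H4_ext:
  assumes "k < 3"
  shows "isCont (D_H4_ext k) z"
proof (cases "H4 z = -6")
  case True
  have "\<forall>\<^sub>F y in at z. D k (H4 y) = D_H4_ext k y"
    using eventually_H4_ne_minus_6 by (rule eventually_mono) (simp add: D_H4_ext_def)
  with D_H4_tendsto[OF assms True] have "(D_H4_ext k \<longlongrightarrow> D_H4_ext k z) (at z)"
    using True by (simp add: D_H4_ext_def Lim_transform_eventually)
  then show ?thesis by (simp add: isCont_def)
next
  case False
  from has_real_derivative_D_H4_ext[OF assms False] show ?thesis by (rule DERIV_isCont)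
qed

lemma integrable_H4_stein_operator_normal:
  "integrable lborel (\<lambda>z. std_normal_density z * H4_stein_operator D (H4 z))"
  by (rule integrable_H4_stein_operator[OF integrable_sq integrable_lin integrable_const])

text \<open>The coefficients are the polynomial solution of
  antiderivative' = std_normal_density * (H4_stein_operator D \<circ> H4), found using
  std_normal_density' z = - z * std_normal_density z and H4' z = 4 * z * (z^2 - 3).\<close>
definition antiderivative :: "real \<Rightarrow> real" where
  "antiderivative z = (48 * z * (z\<^sup>2 - 3) * (6 - z\<^sup>2) * D_H4_ext 2 z
     + (4 * z ^ 5 - 48 * z ^ 3 + 156 * z) * D_H4_ext 1 z + (z ^ 3 - 3 * z) * D_H4_ext 0 z) * std_normal_density z"

lemma antiderivative_has_real_derivative:
  assumes "H4 z \<noteq> -6"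
  shows "(antiderivative has_real_derivative std_normal_density z * H4_stein_operator D (H4 z)) (at z)"
proof -
  define a b c where "a z = 48 * z * (z\<^sup>2 - 3) * (6 - z\<^sup>2)"
    and "b z = 4 * z ^ 5 - 48 * z ^ 3 + 156 * z" and "c z = z ^ 3 - 3 * z" for z :: real
  have a: "(a has_real_derivative 48 * (- 5 * z ^ 4 + 27 * z\<^sup>2 - 18)) (at z)"
    unfolding a_def[abs_def] by (rule derivative_eq_intros refl)+ (simp add: eval_nat_numeral; algebra)
  have b: "(b has_real_derivative 20 * z ^ 4 - 144 * z\<^sup>2 + 156) (at z)"
    unfolding b_def[abs_def] by (rule derivative_eq_intros refl)+ (simp add: eval_nat_numeral; algebra)
  have c: "(c has_real_derivative 3 * z\<^sup>2 - 3) (at z)"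
    unfolding c_def[abs_def] by (rule derivative_eq_intros refl)+ (simp add: eval_nat_numeral; algebra)
  have d0: "(D_H4_ext 0 has_real_derivative D 1 (H4 z) * (4 * z ^ 3 - 12 * z)) (at z)"
    using has_real_derivative_D_H4_ext[OF _ assms, of 0] by (simp add: One_nat_def)
  have d1: "(D_H4_ext 1 has_real_derivative D 2 (H4 z) * (4 * z ^ 3 - 12 * z)) (at z)"
    using has_real_derivative_D_H4_ext[OF _ assms, of 1] by (simp add: numeral_2_eq_2)
  have d2: "(D_H4_ext 2 has_real_derivative D 3 (H4 z) * (4 * z ^ 3 - 12 * z)) (at z)"
    using has_real_derivative_D_H4_ext[OF _ assms, of 2] by simp
  have D_H4_ext_z: "D_H4_ext k z = D k (H4 z)" for k
    using assms by (simp add: D_H4_ext_def)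
  have "antiderivative = (\<lambda>z. (a z * D_H4_ext 2 z + b z * D_H4_ext 1 z + c z * D_H4_ext 0 z) * std_normal_density z)"
    by (simp add: antiderivative_def[abs_def] a_def b_def c_def)
  moreover have "((\<lambda>z. (a z * D_H4_ext 2 z + b z * D_H4_ext 1 z + c z * D_H4_ext 0 z) * std_normal_density z)
      has_real_derivative std_normal_density z * H4_stein_operator D (H4 z)) (at z)"
    using DERIV_mult[OF DERIV_add[OF DERIV_add[OF DERIV_mult[OF a d2] DERIV_mult[OF b d1]]
        DERIV_mult[OF c d0]] std_normal_density_has_real_derivative]
  proof (rule DERIV_cong)
    show "(48 * (- 5 * z ^ 4 + 27 * z\<^sup>2 - 18) * D_H4_ext 2 z + D 3 (H4 z) * (4 * z ^ 3 - 12 * z) * a z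
        + ((20 * z ^ 4 - 144 * z\<^sup>2 + 156) * D_H4_ext 1 z + D 2 (H4 z) * (4 * z ^ 3 - 12 * z) * b z)
        + ((3 * z\<^sup>2 - 3) * D_H4_ext 0 z + D 1 (H4 z) * (4 * z ^ 3 - 12 * z) * c z)) * std_normal_density z
        + - z * std_normal_density z * (a z * D_H4_ext 2 z + b z * D_H4_ext 1 z + c z * D_H4_ext 0 z)
        = std_normal_density z * H4_stein_operator D (H4 z)"
      unfolding D_H4_ext_z a_def b_def c_def H4_stein_operator_def H4_def by algebra
  qed
  ultimately show ?thesis by simp
qed

lemma continuous_on_antiderivative: "continuous_on UNIV antiderivative"
  unfolding antiderivative_def[abs_def]
  by (intro continuous_at_imp_continuous_on ballI continuous_intros isCont_D_H4_ext
      DERIV_isCont[OF std_normal_density_has_real_derivative]) auto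

lemma antiderivative_minus: "antiderivative (- z) = - antiderivative z"
  by (simp add: antiderivative_def std_normal_density_def algebra_simps)

lemma abs_antiderivative_le:
  assumes "z \<ge> 3"
  shows "\<bar>antiderivative z\<bar> \<le> z * std_normal_density z *
    (48 * (H4 z + 15) * (\<bar>D_H4_ext 2 z\<bar> + \<bar>D_H4_ext 1 z\<bar>) + H4 z * \<bar>D_H4_ext 0 z\<bar>)"
proof -
  note bounds = abs_H4_antiderivative_coefficients_le[OF assms]
  have "\<bar>antiderivative z\<bar> = \<bar>48 * z * (z\<^sup>2 - 3) * (6 - z\<^sup>2) * D_H4_ext 2 z
      + (4 * z ^ 5 - 48 * z ^ 3 + 156 * z) * D_H4_ext 1 z + (z ^ 3 - 3 * z) * D_H4_ext 0 z\<bar>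
      * std_normal_density z"
    by (simp add: antiderivative_def abs_mult)
  also have "\<dots> \<le> (\<bar>48 * z * (z\<^sup>2 - 3) * (6 - z\<^sup>2)\<bar> * \<bar>D_H4_ext 2 z\<bar>
      + \<bar>4 * z ^ 5 - 48 * z ^ 3 + 156 * z\<bar> * \<bar>D_H4_ext 1 z\<bar> + \<bar>z ^ 3 - 3 * z\<bar> * \<bar>D_H4_ext 0 z\<bar>)
      * std_normal_density z"
    unfolding abs_mult[symmetric] by (intro mult_right_mono) (arith, simp)
  also have "\<dots> \<le> (z * (48 * (H4 z + 15)) * \<bar>D_H4_ext 2 z\<bar> + z * (48 * (H4 z + 15)) * \<bar>D_H4_ext 1 z\<bar>
      + z * H4 z * \<bar>D_H4_ext 0 z\<bar>) * std_normal_density z"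
    by (intro mult_right_mono add_mono bounds) auto
  finally show ?thesis by (simp add: algebra_simps)
qed

lemma antiderivative_tendsto_0: "(antiderivative \<longlongrightarrow> 0) at_top"
proof -
  have der: "(antiderivative has_real_derivative std_normal_density z * H4_stein_operator D (H4 z)) (at z)"
    if "z \<notin> {sqrt 3, - sqrt 3}" for z
    using that by (intro antiderivative_has_real_derivative) (auto simp: H4_eq_minus_6_iff)
  have "finite {sqrt 3, - sqrt 3}" by simp
  from tendsto_at_top_if_integrable_derivative[OF integrable_H4_stein_operator_normal this
      continuous_on_antiderivative der]
  obtain L where L: "(antiderivative \<longlongrightarrow> L) at_top" by blast
  define r where "r z = 48 * (\<bar>std_normal_density z * (H4 z * D 2 (H4 z))\<bar>
      + 15 * \<bar>std_normal_density z * D 2 (H4 z)\<bar> + \<bar>std_normal_density z * (H4 z * D 1 (H4 z))\<bar>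
      + 15 * \<bar>std_normal_density z * D 1 (H4 z)\<bar>) + \<bar>std_normal_density z * (H4 z * D 0 (H4 z))\<bar>" for z
  have "integrable lborel r"
    unfolding r_def by (intro Bochner_Integration.integrable_add Bochner_Integration.integrable_mult_right
        integrable_abs integrable_lin integrable_const) auto
  moreover have "\<forall>\<^sub>F z in at_top. \<bar>antiderivative z\<bar> \<le> z * r z"
    using eventually_ge_at_top[of 3]
  proof eventually_elim
    case (elim z)
    have "6 \<le> z\<^sup>2" using power_mono[OF elim, of 2] by simp
    then have H4_nonneg: "H4 z \<ge> 0" using H4_pos by (simp add: less_imp_le)
    then have "D_H4_ext k z = D k (H4 z)" for k by (simp add: D_H4_ext_def)
    then have "\<bar>antiderivative z\<bar> \<le> z * std_normal_density z * (48 * (H4 z + 15)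
        * (\<bar>D 2 (H4 z)\<bar> + \<bar>D 1 (H4 z)\<bar>) + H4 z * \<bar>D 0 (H4 z)\<bar>)"
      using abs_antiderivative_le[OF elim] by simp
    also have "\<dots> = z * r z"
    proof -
      have abs_phi: "\<bar>std_normal_density z * d\<bar> = std_normal_density z * \<bar>d\<bar>"
        and abs_H4: "\<bar>H4 z * d\<bar> = H4 z * \<bar>d\<bar>" for d
        using H4_nonneg by (simp_all add: abs_mult)
      show ?thesis unfolding r_def abs_phi abs_H4 by algebra
    qed
    finally show ?case .
  qed
  ultimately have "L = 0"
    by (intro tendsto_at_top_eq_0_if_abs_le_integrable[OF L])
  with L show ?thesis by simp
qed

theorem integral_H4_stein_operator_eq_0:
  "(\<integral>z. std_normal_density z * H4_stein_operator D (H4 z) \<partial>lborel) = 0"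
proof (rule integral_lborel_eq_antiderivative_limit[OF integrable_H4_stein_operator_normal _
      continuous_on_antiderivative antiderivative_has_real_derivative])
  show "finite {sqrt 3, - sqrt 3}" by simp
  show "H4 z \<noteq> -6" if "z \<notin> {sqrt 3, - sqrt 3}" for z
    using that by (simp add: H4_eq_minus_6_iff)
  show "((\<lambda>t. antiderivative t - antiderivative (- t)) \<longlongrightarrow> 0) at_top"
    using tendsto_mult_right_zero[OF antiderivative_tendsto_0, of 2] by (simp add: antiderivative_minus)
qed

end

section \<open>The identity for the expectation\<close>

lemma H4_stein_restrict_deriv:
  assumes distr: "distributed M lborel Z std_normal_density"
    and diff: "\<And>k x. k < 3 \<Longrightarrow> x > -6 \<Longrightarrow> (deriv ^^ k) f differentiable (at x)"
    and int2: "\<And>i. i \<in> {2, 3} \<Longrightarrow>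
       integrable M (\<lambda>\<omega>. (H4 (Z \<omega>))\<^sup>2 * (deriv ^^ i) f (H4 (Z \<omega>)))"
    and int1: "\<And>j. j \<in> {0, 1, 2, 3} \<Longrightarrow>
       integrable M (\<lambda>\<omega>. H4 (Z \<omega>) * (deriv ^^ j) f (H4 (Z \<omega>)))"
    and int0: "\<And>k. k \<in> {1, 2, 3} \<Longrightarrow>
       integrable M (\<lambda>\<omega>. (deriv ^^ k) f (H4 (Z \<omega>)))"
  shows "H4_stein (restrict_deriv {-6<..} f)"
proof -
  let ?D = "restrict_deriv {-6<..} f"
  have [measurable]: "H4 \<in> borel_measurable borel"
    by (simp add: H4_def[abs_def])
  have normal: "integrable lborel (\<lambda>z. std_normal_density z * (p z * ?D k (H4 z)))"
    if "integrable M (\<lambda>\<omega>. p (Z \<omega>) * (deriv ^^ k) f (H4 (Z \<omega>)))"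
      and [measurable]: "p \<in> borel_measurable borel" and "k \<le> 3" for p k
  proof (rule distributed_integrable_AE_cong[OF distr _ that(1)])
    have [measurable]: "?D k \<in> borel_measurable borel"
      using diff \<open>k \<le> 3\<close> by (intro borel_measurable_restrict_deriv[of _ _ 3]) auto
    show "(\<lambda>z. p z * ?D k (H4 z)) \<in> borel_measurable borel" by measurable
    show "AE \<omega> in M. p (Z \<omega>) * (deriv ^^ k) f (H4 (Z \<omega>)) = p (Z \<omega>) * ?D k (H4 (Z \<omega>))"
      using AE_H4_gt_minus_6[OF distr] by eventually_elim (simp add: restrict_deriv_def)
  qed simp
  show ?thesis
  proof
    show "(?D k has_real_derivative ?D (Suc k) x) (at x)" if "k < 3" "x > -6" for k x
      using that diff by (intro has_real_derivative_restrict_deriv) auto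
    show "integrable lborel (\<lambda>z. std_normal_density z * ((H4 z)\<^sup>2 * ?D k (H4 z)))"
      if "k \<in> {2, 3}" for k
      using that int2[OF that] by (intro normal) auto
    show "integrable lborel (\<lambda>z. std_normal_density z * (H4 z * ?D k (H4 z)))"
      if "k \<in> {0, 1, 2, 3}" for k
      using that int1[OF that] by (intro normal) auto
    show "integrable lborel (\<lambda>z. std_normal_density z * ?D k (H4 z))" if "k \<in> {1, 2, 3}" for k
      using that int0[OF that] normal[of "\<lambda>_. 1" k] by auto
  qed
qed

theorem proposition2p4:
  fixes M :: "'a measure" and Z :: "'a \<Rightarrow> real" and f :: "real \<Rightarrow> real"
  assumes "prob_space M"
    and "distributed M lborel Z std_normal_density"
    and diff: "\<And>k x. k < 3 \<Longrightarrow> x > -6 \<Longrightarrow> (deriv ^^ k) f differentiable (at x)"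
    and int2: "\<And>i. i \<in> {2, 3} \<Longrightarrow>
       integrable M (\<lambda>\<omega>. (H4 (Z \<omega>))\<^sup>2 * (deriv ^^ i) f (H4 (Z \<omega>)))"
    and int1: "\<And>j. j \<in> {0, 1, 2, 3} \<Longrightarrow>
       integrable M (\<lambda>\<omega>. H4 (Z \<omega>) * (deriv ^^ j) f (H4 (Z \<omega>)))"
    and int0: "\<And>k. k \<in> {1, 2, 3} \<Longrightarrow>
       integrable M (\<lambda>\<omega>. (deriv ^^ k) f (H4 (Z \<omega>)))"
  shows "(\<integral>\<omega>. (let X = H4 (Z \<omega>) in
            192 * (X + 6) * (3 - X) * (deriv ^^ 3) f X
          + 16 * (X + 3) * (X - 12) * (deriv ^^ 2) f X
          + 4 * (11 * X + 6) * deriv f X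
          - X * f X) \<partial>M) = 0"
proof -
  note distr = assms(2)
  let ?D = "restrict_deriv {-6<..} f"
  interpret H4_stein ?D
    by (rule H4_stein_restrict_deriv[OF distr diff int2 int1 int0])
  have [measurable]: "H4 \<in> borel_measurable borel" "Z \<in> borel_measurable M"
    "H4_stein_operator ?D \<in> borel_measurable borel"
    using distributed_measurable[OF distr] diff
    by (auto simp: H4_def[abs_def] intro!: borel_measurable_H4_stein_operator
        borel_measurable_restrict_deriv[of _ _ 3])
  have "integrable M (\<lambda>\<omega>. 1 * H4_stein_operator (\<lambda>k. (deriv ^^ k) f) (H4 (Z \<omega>)))"
    using int2 int1 int0 by (intro integrable_H4_stein_operator) auto
  then have "(\<integral>\<omega>. H4_stein_operator (\<lambda>k. (deriv ^^ k) f) (H4 (Z \<omega>)) \<partial>M)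
      = (\<integral>\<omega>. H4_stein_operator ?D (H4 (Z \<omega>)) \<partial>M)"
  proof (intro integral_cong_AE)
    show "AE \<omega> in M. H4_stein_operator (\<lambda>k. (deriv ^^ k) f) (H4 (Z \<omega>))
        = H4_stein_operator ?D (H4 (Z \<omega>))"
      using AE_H4_gt_minus_6[OF distr]
      by eventually_elim (simp add: H4_stein_operator_def restrict_deriv_def)
  qed (simp_all add: borel_measurable_integrable)
  also have "\<dots> = (\<integral>z. std_normal_density z * H4_stein_operator ?D (H4 z) \<partial>lborel)"
    by (rule distributed_integral[OF distr, symmetric]) measurable
  also have "\<dots> = 0"
    by (rule integral_H4_stein_operator_eq_0)
  finally show ?thesis
    by (simp add: H4_stein_operator_def Let_def)
qed

end
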